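(* Let $(\Phi,\Gamma,D)$ be a domain-free s-continuous information algebra. Then for every $\phi\in\Phi$ and every $x\in D$, the set $\{\psi\in\Gamma:\ \psi^{\Rightarrow x}=\psi\ll\phi\}$ is directed. Similarly, if $(\Phi,\Gamma,D)$ is a domain-free continuous information algebra, then for every $\phi\in\Phi$ the set $\{\psi\in\Gamma:\ \psi\ll\phi\}$ is directed.
   Context: A domain-free information algebra $(\Phi,D)$ consists of a set $\Phi$, a lattice $D$, a combination $\otimes:\Phi\times\Phi\to\Phi$ and a focusing $\Phi\times D\to\Phi$, $(\psi,x)\mapsto\psi^{\Rightarrow x}$, such that: (1) $\otimes$ is associative and commutative and has a neutral element $e$ (the empty information); (2) $(\psi^{\Rightarrow y})^{\Rightarrow x}=\psi^{\Rightarrow x\wedge y}$ for all $\psi,x,y$; (3) $(\phi^{\Rightarrow x}\otimes\psi)^{\Rightarrow x}=\phi^{\Rightarrow x}\otimes\psi^{\Rightarrow x}$; (4) for every $\psi$ there is $x\in D$ with $\psi^{\Rightarrow x}=\psi$; (5) $\psi\otimes\psi^{\Rightarrow x}=\psi$. $\Phi$ is partially ordered by $\psi\le\phi$ iff $\psi\otimes\phi=\phi$; all suprema $\vee$ are taken with respect to this order. In a poset, $a\ll b$ ($a$ way-below $b$) means: for every directed set $X$ with $b\le\vee X$ there is $c\in X$ with $a\le c$. A domain-free continuous (resp. s-continuous) information algebra is a triple $(\Phi,\Gamma,D)$ where $(\Phi,D)$ is a domain-free information algebra, $D$ has a top element, $\Gamma\subseteq\Phi$ is closed under combination and contains $e$,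 and: (convergency) every directed $X\subseteq\Gamma$ has a supremum $\vee X$ in $\Phi$; (density) $\phi=\vee\{\psi\in\Gamma:\psi\ll\phi\}$ for all $\phi\in\Phi$ (resp. (strong density) $\phi^{\Rightarrow x}=\vee\{\psi\in\Gamma:\psi=\psi^{\Rightarrow x}\ll\phi\}$ for all $\phi\in\Phi$, $x\in D$). *)

theory Defs
  imports Main
begin

text \<open>Domain-free information algebra: carrier = the type 'a (the set Phi),
  lattice D = the type 'd, combination comb, neutral element e, focusing foc.\<close>

definition domain_free_ia ::
  "('a \<Rightarrow> 'a \<Rightarrow> 'a) \<Rightarrow> 'a \<Rightarrow> ('a \<Rightarrow> 'd::lattice \<Rightarrow> 'a) \<Rightarrow> bool" where
  "domain_free_ia comb e foc \<longleftrightarrow>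
     (\<forall>a b c. comb (comb a b) c = comb a (comb b c)) \<and>
     (\<forall>a b. comb a b = comb b a) \<and>
     (\<forall>a. comb e a = a) \<and>
     (\<forall>psi x y. foc (foc psi y) x = foc psi (inf x y)) \<and>
     (\<forall>phi psi x. foc (comb (foc phi x) psi) x = comb (foc phi x) (foc psi x)) \<and>
     (\<forall>psi. \<exists>x. foc psi x = psi) \<and>
     (\<forall>psi x. comb psi (foc psi x) = psi)"

definition info_le :: "('a \<Rightarrow> 'a \<Rightarrow> 'a) \<Rightarrow> 'a \<Rightarrow> 'a \<Rightarrow> bool" where
  "info_le comb psi phi \<longleftrightarrow> comb psi phi = phi"

definition is_sup :: "('a \<Rightarrow> 'a \<Rightarrow> 'a) \<Rightarrow> 'a set \<Rightarrow> 'a \<Rightarrow> bool" where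
  "is_sup comb X s \<longleftrightarrow> (\<forall>a\<in>X. info_le comb a s) \<and>
     (\<forall>u. (\<forall>a\<in>X. info_le comb a u) \<longrightarrow> info_le comb s u)"

definition info_directed :: "('a \<Rightarrow> 'a \<Rightarrow> 'a) \<Rightarrow> 'a set \<Rightarrow> bool" where
  "info_directed comb X \<longleftrightarrow> X \<noteq> {} \<and>
     (\<forall>a\<in>X. \<forall>b\<in>X. \<exists>c\<in>X. info_le comb a c \<and> info_le comb b c)"

definition way_below :: "('a \<Rightarrow> 'a \<Rightarrow> 'a) \<Rightarrow> 'a \<Rightarrow> 'a \<Rightarrow> bool" where
  "way_below comb a b \<longleftrightarrow>
     (\<forall>X s. info_directed comb X \<and> is_sup comb X s \<and> info_le comb b s
        \<longrightarrow> (\<exists>c\<in>X. info_le comb a c))"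

definition df_ia_base ::
  "('a \<Rightarrow> 'a \<Rightarrow> 'a) \<Rightarrow> 'a \<Rightarrow> ('a \<Rightarrow> 'd::lattice \<Rightarrow> 'a) \<Rightarrow> 'a set \<Rightarrow> bool" where
  "df_ia_base comb e foc G \<longleftrightarrow>
     domain_free_ia comb e foc \<and>
     (\<exists>t::'d. \<forall>x. x \<le> t) \<and>
     (\<forall>a\<in>G. \<forall>b\<in>G. comb a b \<in> G) \<and> e \<in> G \<and>
     (\<forall>X. X \<subseteq> G \<and> info_directed comb X \<longrightarrow> (\<exists>s. is_sup comb X s))"

definition df_continuous_ia ::
  "('a \<Rightarrow> 'a \<Rightarrow> 'a) \<Rightarrow> 'a \<Rightarrow> ('a \<Rightarrow> 'd::lattice \<Rightarrow> 'a) \<Rightarrow> 'a set \<Rightarrow> bool" where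
  "df_continuous_ia comb e foc G \<longleftrightarrow>
     df_ia_base comb e foc G \<and>
     (\<forall>phi. is_sup comb {psi\<in>G. way_below comb psi phi} phi)"

definition df_s_continuous_ia ::
  "('a \<Rightarrow> 'a \<Rightarrow> 'a) \<Rightarrow> 'a \<Rightarrow> ('a \<Rightarrow> 'd::lattice \<Rightarrow> 'a) \<Rightarrow> 'a set \<Rightarrow> bool" where
  "df_s_continuous_ia comb e foc G \<longleftrightarrow>
     df_ia_base comb e foc G \<and>
     (\<forall>phi x. is_sup comb {psi\<in>G. foc psi x = psi \<and> way_below comb psi phi} (foc phi x))"

end

theory Submission
  imports Defs
begin

text \<open>Combination is an idempotent, commutative and associative operation, so the
  information order is the order of a join-semilattice with least element \<open>e\<close>.
  Way-below elements are closed under joins, since two elements of a directed set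
  have a common upper bound in it, and \<open>e\<close> is way-below everything. Focusing on
  \<open>x\<close> preserves joins of \<open>x\<close>-focused elements, so in both cases the set in question
  contains \<open>e\<close> and is closed under combination, hence directed.\<close>

lemma semilattice_if_domain_free_ia:
  assumes "domain_free_ia comb e foc"
  shows "semilattice comb"
proof
  fix a
  obtain x where "foc a x = a" using assms unfolding domain_free_ia_def by blast
  moreover have "comb a (foc a x) = a" using assms unfolding domain_free_ia_def by blast
  ultimately show "comb a a = a" by simp
qed (use assms in \<open>unfold domain_free_ia_def, blast+\<close>)

lemma info_le_trans:
  assumes "semigroup comb" "info_le comb a b" "info_le comb b c"
  shows "info_le comb a c"
  using assms semigroup.assoc[OF assms(1)] unfolding info_le_def by metis

lemma info_le_comb:
  assumes "semilattice comb"
  shows "info_le comb a (comb a b)" "info_le comb b (comb a b)"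
proof -
  interpret semilattice comb by fact
  show "info_le comb a (comb a b)" "info_le comb b (comb a b)"
    unfolding info_le_def by (simp_all add: ac_simps)
qed

lemma comb_info_le:
  assumes "semigroup comb" "info_le comb a c" "info_le comb b c"
  shows "info_le comb (comb a b) c"
  using assms semigroup.assoc[OF assms(1)] unfolding info_le_def by metis

lemma way_below_least:
  assumes "\<And>a. info_le comb e a"
  shows "way_below comb e phi"
  using assms unfolding way_below_def info_directed_def by blast

lemma way_below_comb:
  assumes "semilattice comb" "way_below comb a phi" "way_below comb b phi"
  shows "way_below comb (comb a b) phi"
  unfolding way_below_def
proof (intro allI impI)
  fix X s
  assume X: "info_directed comb X \<and> is_sup comb X s \<and> info_le comb phi s"
  have semigroup: "semigroup comb"
    using assms(1) by (simp add: semilattice_def abel_semigroup_def)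
  obtain ca where ca: "ca \<in> X" "info_le comb a ca"
    using assms(2) X unfolding way_below_def by blast
  obtain cb where cb: "cb \<in> X" "info_le comb b cb"
    using assms(3) X unfolding way_below_def by blast
  obtain c where c: "c \<in> X" "info_le comb ca c" "info_le comb cb c"
    using X ca cb unfolding info_directed_def by blast
  have "info_le comb (comb a b) c"
    using comb_info_le info_le_trans ca cb c semigroup by metis
  with c show "\<exists>c\<in>X. info_le comb (comb a b) c" by blast
qed

lemma info_directed_if_comb_closed:
  assumes "semilattice comb" "X \<noteq> {}" "\<And>a b. a \<in> X \<Longrightarrow> b \<in> X \<Longrightarrow> comb a b \<in> X"
  shows "info_directed comb X"
  using assms info_le_comb[OF assms(1)] unfolding info_directed_def by blast

lemma info_directed_way_below_set:
  assumes D: "domain_free_ia comb e foc"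
    and e: "e \<in> X" "P e"
    and closed: "\<And>a b. a \<in> X \<Longrightarrow> b \<in> X \<Longrightarrow> comb a b \<in> X"
    and P_comb: "\<And>a b. P a \<Longrightarrow> P b \<Longrightarrow> P (comb a b)"
  shows "info_directed comb {psi\<in>X. P psi \<and> way_below comb psi phi}"
proof -
  have semilattice: "semilattice comb" using semilattice_if_domain_free_ia[OF D] .
  have "\<And>a. info_le comb e a"
    using D unfolding domain_free_ia_def info_le_def by blast
  then have "way_below comb e phi" by (rule way_below_least)
  with e show ?thesis
    by (intro info_directed_if_comb_closed semilattice)
       (auto intro: closed P_comb way_below_comb[OF semilattice])
qed

lemma foc_neutral:
  assumes "domain_free_ia comb e foc"
  shows "foc e x = e"
  using assms unfolding domain_free_ia_def by metis

lemma foc_comb_fixed: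
  assumes "domain_free_ia comb e foc" "foc a x = a" "foc b x = b"
  shows "foc (comb a b) x = comb a b"
  using assms unfolding domain_free_ia_def by metis

theorem proposition3p5:
  fixes comb :: "'a \<Rightarrow> 'a \<Rightarrow> 'a" and e :: 'a
    and foc :: "'a \<Rightarrow> 'd::lattice \<Rightarrow> 'a" and G :: "'a set"
  shows "(df_s_continuous_ia comb e foc G \<longrightarrow>
            (\<forall>phi x. info_directed comb {psi\<in>G. foc psi x = psi \<and> way_below comb psi phi})) \<and>
         (df_continuous_ia comb e foc G \<longrightarrow>
            (\<forall>phi. info_directed comb {psi\<in>G. way_below comb psi phi}))"
proof (intro conjI impI allI)
  fix phi x
  assume "df_s_continuous_ia comb e foc G"
  then have D: "domain_free_ia comb e foc" and "e \<in> G" and "\<forall>a\<in>G. \<forall>b\<in>G. comb a b \<in> G"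
    unfolding df_s_continuous_ia_def df_ia_base_def by blast+
  then show "info_directed comb {psi\<in>G. foc psi x = psi \<and> way_below comb psi phi}"
    by (intro info_directed_way_below_set[OF D, where P = "\<lambda>psi. foc psi x = psi"])
       (simp_all add: foc_neutral[OF D] foc_comb_fixed[OF D])
next
  fix phi
  assume "df_continuous_ia comb e foc G"
  then have D: "domain_free_ia comb e foc" and "e \<in> G" and "\<forall>a\<in>G. \<forall>b\<in>G. comb a b \<in> G"
    unfolding df_continuous_ia_def df_ia_base_def by blast+
  then show "info_directed comb {psi\<in>G. way_below comb psi phi}"
    using info_directed_way_below_set[OF D, where P = "\<lambda>_. True"] by simp
qed

end
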